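(* Let $T$ satisfy Condition 1 and let $U$ be a quantization of $T$ with respect to the partition $\mathcal M_\Bbbk$ of $[0,1]$ into $N_\Bbbk$ equal intervals. Let $X\subset[0,1]$ be an interval (or a finite union of intervals) such that all endpoints of $X$ and all endpoints of $T^{-1}X$ belong to the set of endpoints of the intervals of $\mathcal M_\Bbbk$. Then $$U^{-1}P_XU=P_{T^{-1}X},$$ where for a set $Y$ of this kind $P_Y=\mathrm{Op}_\Bbbk(\chi_Y)$ with $\chi_Y$ the characteristic function of $Y$.
   Context: Condition 1: $T:[0,1]\to[0,1]$, integers $\Lambda_1,\dots,\Lambda_l\geq2$ with $\sum\Lambda_j^{-1}=1$, consecutive intervals $I_1,\dots,I_l$ with $|I_j|=\Lambda_j^{-1}$, $T$ affine with slope $\Lambda_j$ on $I_j$ mapping $I_j$ onto $[0,1]$. $\mathcal M_\Bbbk$ consists of $E_i=[(i-1)/N_\Bbbk,i/N_\Bbbk]$, $i=1,\dots,N_\Bbbk$, where all endpoints of the $I_j$ are endpoints of intervals of $\mathcal M_\Bbbk$. With $B_\Bbbk(i,j)=|E_i\cap T^{-1}E_j|/|E_i|$, a quantization is a unitary $N_\Bbbk\times N_\Bbbk$ matrix $U$ with $B_\Bbbk(j,i)=|U(i,j)|^2$ for all $i,j$. $\mathrm{Op}_\Bbbk(f)$ is the diagonal matrix with $(i,i)$ entry equal to the average $N_\Bbbk\int_{E_i}f\,dx$ (so $P_Y$ is the orthogonal projection onto the coordinates $i$ with $E_i\subseteq Y$). *)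

theory Defs
  imports "HOL-Analysis.Analysis" "Jordan_Normal_Form.Schur_Decomposition"
    "Jordan_Normal_Form.Gauss_Jordan_Elimination"
begin

definition grid :: "nat \<Rightarrow> real set" where
  "grid N = {real m / real N | m. m \<le> N}"

text \<open>Partition interval E_i, 0-based: E i = [i/N, (i+1)/N], i = 0..N-1
  (the paper's E_(i+1)).\<close>
definition cell :: "nat \<Rightarrow> nat \<Rightarrow> real set" where
  "cell N i = {real i / real N .. real (Suc i) / real N}"

definition preim :: "(real \<Rightarrow> real) \<Rightarrow> real set \<Rightarrow> real set" where
  "preim T Y = {x \<in> {0..1}. T x \<in> Y}"

text \<open>Condition 1: breakpoints a 0 = 0 < a 1 < ... < a l = 1, I_j = [a j, a (j+1)],
  |I_j| = 1/Lam j, Lam j >= 2 integer, sum of 1/Lam j = 1, T affine of slope Lam j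
  on I_j mapping I_j onto [0,1] (prescribed on the interior of I_j; at the finitely many
  breakpoints T is only required to take values in [0,1]).\<close>
definition condition1 ::
  "(real \<Rightarrow> real) \<Rightarrow> nat \<Rightarrow> (nat \<Rightarrow> nat) \<Rightarrow> (nat \<Rightarrow> real) \<Rightarrow> bool" where
  "condition1 T l Lam a \<longleftrightarrow>
     (\<forall>j<l. Lam j \<ge> 2) \<and>
     (\<Sum>j<l. 1 / real (Lam j)) = 1 \<and>
     a 0 = 0 \<and> a l = 1 \<and>
     (\<forall>j<l. a (Suc j) - a j = 1 / real (Lam j)) \<and>
     (\<forall>x\<in>{0..1}. T x \<in> {0..1}) \<and>
     (\<forall>j<l. \<forall>x\<in>{a j<..<a (Suc j)}. T x = real (Lam j) * (x - a j))"

definition grid_union :: "nat \<Rightarrow> real set \<Rightarrow> bool" where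
  "grid_union N Y \<longleftrightarrow> (\<exists>F. finite F \<and> Y = \<Union>F \<and>
     (\<forall>I\<in>F. is_interval I \<and> I \<noteq> {} \<and> bounded I \<and> Inf I \<in> grid N \<and> Sup I \<in> grid N))"

definition Bmat :: "(real \<Rightarrow> real) \<Rightarrow> nat \<Rightarrow> nat \<Rightarrow> nat \<Rightarrow> real" where
  "Bmat T N i j = measure lborel (cell N i \<inter> preim T (cell N j)) / measure lborel (cell N i)"

definition Op :: "nat \<Rightarrow> (real \<Rightarrow> real) \<Rightarrow> complex mat" where
  "Op N f = mat N N (\<lambda>(i,j). if i = j then complex_of_real (real N * (\<integral>x\<in>cell N i. f x \<partial>lborel)) else 0)"

definition proj :: "nat \<Rightarrow> real set \<Rightarrow> complex mat" where
  "proj N Y = Op N (indicator Y)"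

definition unitary_mat :: "complex mat \<Rightarrow> bool" where
  "unitary_mat U \<longleftrightarrow> U * mat_adjoint U = 1\<^sub>m (dim_row U) \<and> mat_adjoint U * U = 1\<^sub>m (dim_row U)"

definition quantization :: "(real \<Rightarrow> real) \<Rightarrow> nat \<Rightarrow> complex mat \<Rightarrow> bool" where
  "quantization T N U \<longleftrightarrow> U \<in> carrier_mat N N \<and> unitary_mat U \<and>
     (\<forall>i<N. \<forall>j<N. Bmat T N j i = (cmod (U $$ (i,j)))\<^sup>2)"

end

theory Submission
  imports Defs
begin

text \<open>Since X and T^{-1}X have their endpoints on the grid, every open cell lies inside or
  outside each of them, so P_X and P_{T^{-1}X} are the diagonal 0/1 matrices recording which.
  If U(i,j) \<noteq> 0, then B(j,i) > 0, so a set of positive measure in E_j is mapped into E_i; as T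
  has finite fibres, some interior point of E_j is then mapped to an interior point of E_i, and
  hence E_i \<subseteq> X exactly when E_j \<subseteq> T^{-1}X. Therefore P_X U = U P_{T^{-1}X}, and U is
  invertible.\<close>

definition open_cell :: "nat \<Rightarrow> nat \<Rightarrow> real set" where
  "open_cell N i = {real i / real N <..< real (Suc i) / real N}"

lemma open_cell_subset_cell: "open_cell N i \<subseteq> cell N i"
  unfolding open_cell_def cell_def by auto

lemma cell_diff_open_cell: "cell N i - open_cell N i \<subseteq> {real i / real N, real (Suc i) / real N}"
  unfolding open_cell_def cell_def by auto

lemma measure_lborel_countable: "countable A \<Longrightarrow> measure lborel A = 0"
  for A :: "'a::euclidean_space set"
  by (simp add: measure_def emeasure_lborel_countable)

lemma mem_bounded_interval_between_Inf_Sup: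
  fixes I :: "real set"
  assumes "is_interval I" "bounded I" "I \<noteq> {}" "Inf I < y" "y < Sup I"
  shows "y \<in> I"
proof -
  have "bdd_below I" "bdd_above I"
    using assms(2) bounded_imp_bdd_below bounded_imp_bdd_above by auto
  then obtain u v where "u \<in> I" "u < y" "v \<in> I" "y < v"
    using assms(3-5) by (meson cInf_lessD less_cSupD)
  then show ?thesis
    using assms(1) unfolding is_interval_1 by (meson less_imp_le)
qed

lemma grid_union_open_cell_subset_or_disjoint:
  assumes N: "N > 0" and Y: "grid_union N Y"
  shows "open_cell N i \<subseteq> Y \<or> open_cell N i \<inter> Y = {}"
proof (rule ccontr)
  assume split: "\<not> (open_cell N i \<subseteq> Y \<or> open_cell N i \<inter> Y = {})"
  then obtain x where x: "x \<in> open_cell N i" "x \<in> Y" by auto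
  obtain F where F: "Y = \<Union>F"
    "\<forall>I\<in>F. is_interval I \<and> I \<noteq> {} \<and> bounded I \<and> Inf I \<in> grid N \<and> Sup I \<in> grid N"
    using Y unfolding grid_union_def by blast
  obtain I where "I \<in> F" "x \<in> I" using x F by auto
  then have I: "is_interval I" "I \<noteq> {}" "bounded I" "Inf I \<in> grid N" "Sup I \<in> grid N"
    and "I \<subseteq> Y" using F by auto
  obtain m m' where m: "Inf I = real m / real N" and m': "Sup I = real m' / real N"
    using I(4,5) unfolding grid_def by auto
  have "Inf I \<le> x" "x \<le> Sup I"
    using \<open>x \<in> I\<close> I(3) bounded_imp_bdd_below bounded_imp_bdd_above
    by (auto intro: cInf_lower cSup_upper)
  with x(1) m m' have "real m / real N < real (Suc i) / real N" "real i / real N < real m' / real N"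
    unfolding open_cell_def by auto
  then have "real m < real (Suc i)" "real i < real m'"
    using N by (auto simp: divide_less_cancel simp del: of_nat_Suc)
  then have "Inf I \<le> real i / real N" "real (Suc i) / real N \<le> Sup I"
    unfolding m m' by (auto intro!: divide_right_mono simp del: of_nat_Suc)
  then have "open_cell N i \<subseteq> I"
    using I(1-3) unfolding open_cell_def by (auto intro: mem_bounded_interval_between_Inf_Sup)
  with \<open>I \<subseteq> Y\<close> split show False by blast
qed

lemma grid_union_sets_borel: "grid_union N Y \<Longrightarrow> Y \<in> sets borel"
  unfolding grid_union_def using real_interval_borel_measurable by (blast intro: sets.finite_Union)

lemma measure_cell_inter_grid_union:
  assumes N: "N > 0" and Y: "grid_union N Y"
  shows "measure lborel (cell N i \<inter> Y) = (if open_cell N i \<subseteq> Y then 1 / real N else 0)"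
proof (cases "open_cell N i \<subseteq> Y")
  case True
  have "real i / real N \<le> real (Suc i) / real N"
    by (simp add: divide_right_mono del: of_nat_Suc)
  moreover have "real (Suc i) / real N - real i / real N = 1 / real N"
    by (simp add: diff_divide_distrib[symmetric])
  ultimately have len: "measure lborel (cell N i) = 1 / real N"
    "measure lborel (open_cell N i) = 1 / real N"
    by (simp_all add: cell_def open_cell_def)
  have cell: "cell N i \<in> fmeasurable lborel" by (simp add: cell_def fmeasurable_compact)
  have inter: "cell N i \<inter> Y \<in> fmeasurable lborel"
    using fmeasurable_Int_fmeasurable[OF cell] grid_union_sets_borel[OF Y] by simp
  then have "measure lborel (open_cell N i) \<le> measure lborel (cell N i \<inter> Y)"
    using True open_cell_subset_cell
    by (intro measure_mono_fmeasurable) (auto simp: open_cell_def)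
  moreover have "measure lborel (cell N i \<inter> Y) \<le> measure lborel (cell N i)"
    using measure_mono_fmeasurable[OF Int_lower1 fmeasurableD[OF inter] cell] .
  ultimately show ?thesis using True len by simp
next
  case False
  then have "cell N i \<inter> Y \<subseteq> {real i / real N, real (Suc i) / real N}"
    using grid_union_open_cell_subset_or_disjoint[OF N Y, of i] cell_diff_open_cell[of N i]
    by blast
  then have "countable (cell N i \<inter> Y)" by (rule countable_subset) simp
  with False show ?thesis by (simp add: measure_lborel_countable)
qed

lemma index_proj_grid_union:
  assumes "N > 0" "grid_union N Y" "i < N" "j < N"
  shows "proj N Y $$ (i, j) = (if i = j \<and> open_cell N i \<subseteq> Y then 1 else 0)"
proof -
  have "(\<integral>x\<in>cell N i. indicator Y x \<partial>lborel) = measure lborel (cell N i \<inter> Y)"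
    by (simp add: set_lebesgue_integral_def indicator_inter_arith[symmetric] mult.commute Int_commute)
  then have entry: "complex_of_real (real N * (\<integral>x\<in>cell N i. indicator Y x \<partial>lborel))
      = (if open_cell N i \<subseteq> Y then 1 else 0)"
    using assms(1,2) by (simp add: measure_cell_inter_grid_union)
  have "proj N Y $$ (i, j) = (if i = j
      then complex_of_real (real N * (\<integral>x\<in>cell N i. indicator Y x \<partial>lborel)) else 0)"
    unfolding proj_def Op_def using assms(3,4) by simp
  then show ?thesis unfolding entry by simp
qed

lemma mem_breakpoint_or_between:
  fixes a :: "nat \<Rightarrow> real"
  assumes "\<forall>k<l. a k < a (Suc k)" "a 0 \<le> x" "x \<le> a l"
  shows "(\<exists>k\<le>l. x = a k) \<or> (\<exists>k<l. a k < x \<and> x < a (Suc k))"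
  using assms
proof (induction l)
  case (Suc l)
  show ?case
  proof (cases "x \<le> a l")
    case True
    with Suc show ?thesis by (metis le_SucI less_SucI)
  next
    case False
    with Suc.prems(3) show ?thesis by (metis lessI le_refl linorder_not_le order_le_neq_trans)
  qed
qed auto

lemma condition1_finite_fibre:
  assumes T: "condition1 T l Lam a"
  shows "finite {x \<in> {0..1}. T x = y}"
proof -
  have ends: "a 0 = 0" "a l = 1" using T unfolding condition1_def by auto
  have inc: "\<forall>k<l. a k < a (Suc k)"
  proof (intro allI impI)
    fix k assume "k < l"
    then have "a (Suc k) - a k = 1 / real (Lam k)" "Lam k \<ge> 2"
      using T unfolding condition1_def by auto
    moreover from \<open>Lam k \<ge> 2\<close> have "1 / real (Lam k) > 0" by simp
    ultimately show "a k < a (Suc k)" by linarith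
  qed
  have "{x \<in> {0..1}. T x = y} \<subseteq> a ` {..l} \<union> (\<lambda>k. a k + y / real (Lam k)) ` {..<l}"
  proof
    fix x assume x: "x \<in> {x \<in> {0..1}. T x = y}"
    then consider "\<exists>k\<le>l. x = a k" | k where "k < l" "a k < x" "x < a (Suc k)"
      using mem_breakpoint_or_between[OF inc, of x] ends by auto
    then show "x \<in> a ` {..l} \<union> (\<lambda>k. a k + y / real (Lam k)) ` {..<l}"
    proof cases
      case (2 k)
      then have "y = real (Lam k) * (x - a k)" "Lam k \<ge> 2"
        using x T unfolding condition1_def by auto
      then have "x = a k + y / real (Lam k)" by (simp add: field_simps)
      with \<open>k < l\<close> show ?thesis by auto
    qed auto
  qed
  then show ?thesis by (rule finite_subset) auto
qed

text \<open>Only finitely many points of E_j lie on an endpoint of E_j or are mapped to an endpoint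
  of E_i, and these carry no measure.\<close>

lemma Bmat_nonzero_imp_open_cell_point:
  assumes T: "condition1 T l Lam a" and B: "Bmat T N j i \<noteq> 0"
  obtains x where "x \<in> open_cell N j" "x \<in> {0..1}" "T x \<in> open_cell N i"
proof (rule ccontr)
  assume none: "\<not> thesis"
  let ?F = "{real j / real N, real (Suc j) / real N} \<union> {x \<in> {0..1}. T x = real i / real N}
     \<union> {x \<in> {0..1}. T x = real (Suc i) / real N}"
  have "cell N j \<inter> preim T (cell N i) \<subseteq> ?F"
    using none that cell_diff_open_cell[of N i] cell_diff_open_cell[of N j]
    unfolding preim_def by blast
  moreover have "finite ?F" using condition1_finite_fibre[OF T] by auto
  ultimately have "measure lborel (cell N j \<inter> preim T (cell N i)) = 0"
    by (meson countable_finite finite_subset measure_lborel_countable)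
  with B show False unfolding Bmat_def by simp
qed

lemma Bmat_nonzero_imp_open_cell_subset_iff:
  assumes N: "N > 0" and T: "condition1 T l Lam a"
    and X: "grid_union N X" and TX: "grid_union N (preim T X)"
    and B: "Bmat T N j i \<noteq> 0"
  shows "open_cell N i \<subseteq> X \<longleftrightarrow> open_cell N j \<subseteq> preim T X"
proof -
  obtain x where x: "x \<in> open_cell N j" "x \<in> {0..1}" "T x \<in> open_cell N i"
    using Bmat_nonzero_imp_open_cell_point[OF T B] .
  then have "open_cell N i \<subseteq> X \<longleftrightarrow> x \<in> preim T X"
    using grid_union_open_cell_subset_or_disjoint[OF N X, of i] unfolding preim_def by auto
  also have "\<dots> \<longleftrightarrow> open_cell N j \<subseteq> preim T X"
    using x grid_union_open_cell_subset_or_disjoint[OF N TX, of j] by auto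
  finally show ?thesis .
qed

lemma diagonal_mult_commute:
  fixes U :: "'a::comm_ring_1 mat"
  assumes U: "U \<in> carrier_mat n n"
    and D: "D \<in> carrier_mat n n" "\<And>i j. i < n \<Longrightarrow> j < n \<Longrightarrow> D $$ (i, j) = (if i = j then d i else 0)"
    and E: "E \<in> carrier_mat n n" "\<And>i j. i < n \<Longrightarrow> j < n \<Longrightarrow> E $$ (i, j) = (if i = j then e i else 0)"
    and compat: "\<And>i k. i < n \<Longrightarrow> k < n \<Longrightarrow> U $$ (i, k) \<noteq> 0 \<Longrightarrow> d i = e k"
  shows "D * U = U * E"
proof (rule eq_matI)
  fix i k assume "i < dim_row (U * E)" "k < dim_col (U * E)"
  then have i: "i < n" and k: "k < n" using U E by auto
  have "(D * U) $$ (i, k) = (\<Sum>r\<in>{0..<n}. D $$ (i, r) * U $$ (r, k))"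
    using i k U D by (auto simp: scalar_prod_def row_def col_def intro!: sum.cong)
  also have "\<dots> = (\<Sum>r\<in>{0..<n}. if r = i then d i * U $$ (r, k) else 0)"
    using i D(2) by (intro sum.cong) auto
  also have "\<dots> = d i * U $$ (i, k)" using i by simp
  also have "\<dots> = U $$ (i, k) * e k" using compat[OF i k] by (cases "U $$ (i, k) = 0") auto
  also have "\<dots> = (\<Sum>r\<in>{0..<n}. if r = k then U $$ (i, r) * e k else 0)"
    using k by simp
  also have "\<dots> = (\<Sum>r\<in>{0..<n}. U $$ (i, r) * E $$ (r, k))"
    using k E(2) by (intro sum.cong) auto
  also have "\<dots> = (U * E) $$ (i, k)"
    using i k U E by (auto simp: scalar_prod_def row_def col_def intro!: sum.cong)
  finally show "(D * U) $$ (i, k) = (U * E) $$ (i, k)" .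
qed (use U D E in auto)

lemma unitary_mat_inverse:
  assumes U: "U \<in> carrier_mat n n" "unitary_mat U"
  obtains B where "mat_inverse U = Some B" "B * U = 1\<^sub>m n" "B \<in> carrier_mat n n"
proof (cases "mat_inverse U")
  case None
  have "mat_adjoint U \<in> carrier_mat n n" using U(1) unfolding mat_adjoint_def by auto
  then have "U \<in> Units (ring_mat TYPE(complex) n ())"
    using U unfolding Units_def ring_mat_def unitary_mat_def by auto
  moreover have "U \<notin> Units (ring_mat TYPE(complex) n ())"
    by (rule mat_inverse(1)[OF U(1) None])
  ultimately show thesis by blast
next
  case (Some B)
  then show thesis using mat_inverse(2)[OF U(1) Some] that by blast
qed

lemma conjugate_by_left_inverse:
  fixes B U P Q :: "'a::semiring_1 mat"
  assumes "B \<in> carrier_mat n n" "U \<in> carrier_mat n n" "P \<in> carrier_mat n n" "Q \<in> carrier_mat n n"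
    and "B * U = 1\<^sub>m n" "P * U = U * Q"
  shows "B * P * U = Q"
proof -
  have "B * P * U = B * (U * Q)" using assms by (simp add: assoc_mult_mat)
  also have "\<dots> = (B * U) * Q" using assms(1,2,4) by (simp add: assoc_mult_mat)
  finally show ?thesis using assms(4,5) by simp
qed

lemma proj_carrier_mat: "proj N Y \<in> carrier_mat N N"
  unfolding proj_def Op_def by auto

theorem proposition2:
  fixes T :: "real \<Rightarrow> real" and l N :: nat and Lam :: "nat \<Rightarrow> nat" and a :: "nat \<Rightarrow> real"
    and U :: "complex mat" and X :: "real set"
  assumes "N > 0"
    and "condition1 T l Lam a"
    and "\<forall>j\<le>l. a j \<in> grid N"
    and "quantization T N U"
    and "grid_union N X"
    and "grid_union N (preim T X)"
  shows "the (mat_inverse U) * proj N X * U = proj N (preim T X)"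
proof -
  have U: "U \<in> carrier_mat N N" "unitary_mat U"
    and B: "\<And>i j. i < N \<Longrightarrow> j < N \<Longrightarrow> Bmat T N j i = (cmod (U $$ (i, j)))\<^sup>2"
    using assms(4) unfolding quantization_def by auto
  let ?d = "\<lambda>i. if open_cell N i \<subseteq> X then 1 else 0 :: complex"
  let ?e = "\<lambda>k. if open_cell N k \<subseteq> preim T X then 1 else 0 :: complex"
  have "proj N X * U = U * proj N (preim T X)"
  proof (rule diagonal_mult_commute[OF U(1) proj_carrier_mat _ proj_carrier_mat, of _ ?d _ ?e])
    fix i k assume "i < N" "k < N" "U $$ (i, k) \<noteq> 0"
    then have "Bmat T N k i \<noteq> 0" using B by simp
    then show "?d i = ?e k"
      using Bmat_nonzero_imp_open_cell_subset_iff[OF assms(1,2,5,6)] by simp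
  qed (auto simp: index_proj_grid_union assms(1,5,6))
  moreover obtain V where "mat_inverse U = Some V" "V * U = 1\<^sub>m N" "V \<in> carrier_mat N N"
    using unitary_mat_inverse[OF U] .
  ultimately show ?thesis
    using conjugate_by_left_inverse[OF _ U(1) proj_carrier_mat proj_carrier_mat] by simp
qed

end
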